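(* Let $R$ be a commutative ring with identity and $q(R)$ its classical ring of quotients. Then (1) $R$ is roughly reduced if and only if $q(R)$ is roughly reduced; (2) $R$ is roughly complemented if and only if $q(R)$ is roughly complemented.
   Context: For a ring $A$: $\mathfrak{N}(A)$ is the nilradical, $\mathrm{reg}(A)$ the regular elements, $q(A)$ the localization at $\mathrm{reg}(A)$, $\mathrm{areg}(A)=\{x: x+\mathfrak{N}(A)\in\mathrm{reg}(A/\mathfrak{N}(A))\}$, and $\eta(A)=\bigcup_{s\in\mathrm{areg}(A)}\mathrm{Ann}(s)$. $A$ is roughly reduced if $\eta(A)=\mathfrak{N}(A)$. $A$ is roughly complemented if for every $a\in A$ there is $b$ with $ab=0$ and $a+b\in\mathrm{areg}(A)$. *)

theory Defs
  imports "HOL-Algebra.QuotRing"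
begin

definition nilrad :: "('a, 'b) ring_scheme \<Rightarrow> 'a set" where
  "nilrad R = {x \<in> carrier R. \<exists>n::nat. x [^]\<^bsub>R\<^esub> n = \<zero>\<^bsub>R\<^esub>}"

definition reg :: "('a, 'b) ring_scheme \<Rightarrow> 'a set" where
  "reg R = {x \<in> carrier R. \<forall>y \<in> carrier R. x \<otimes>\<^bsub>R\<^esub> y = \<zero>\<^bsub>R\<^esub> \<longrightarrow> y = \<zero>\<^bsub>R\<^esub>}"

definition areg :: "('a, 'b) ring_scheme \<Rightarrow> 'a set" where
  "areg R = {x \<in> carrier R. (nilrad R +>\<^bsub>R\<^esub> x) \<in> reg (R Quot (nilrad R))}"

definition ann :: "('a, 'b) ring_scheme \<Rightarrow> 'a \<Rightarrow> 'a set" where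
  "ann R s = {y \<in> carrier R. s \<otimes>\<^bsub>R\<^esub> y = \<zero>\<^bsub>R\<^esub>}"

definition eta :: "('a, 'b) ring_scheme \<Rightarrow> 'a set" where
  "eta R = (\<Union>s \<in> areg R. ann R s)"

definition roughly_reduced :: "('a, 'b) ring_scheme \<Rightarrow> bool" where
  "roughly_reduced R \<longleftrightarrow> eta R = nilrad R"

definition roughly_complemented :: "('a, 'b) ring_scheme \<Rightarrow> bool" where
  "roughly_complemented R \<longleftrightarrow>
     (\<forall>a \<in> carrier R. \<exists>b \<in> carrier R. a \<otimes>\<^bsub>R\<^esub> b = \<zero>\<^bsub>R\<^esub> \<and> a \<oplus>\<^bsub>R\<^esub> b \<in> areg R)"

text \<open>The classical ring of quotients q(R) = localization of R at reg(R):
  fractions a/s with s regular, a/s = b/t iff u(at - bs) = 0 for some regular u.\<close>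

definition frac_rel :: "('a, 'b) ring_scheme \<Rightarrow> (('a \<times> 'a) \<times> ('a \<times> 'a)) set" where
  "frac_rel R = {((a, s), (b, t)). a \<in> carrier R \<and> s \<in> reg R \<and> b \<in> carrier R \<and> t \<in> reg R \<and>
      (\<exists>u \<in> reg R. u \<otimes>\<^bsub>R\<^esub> (a \<otimes>\<^bsub>R\<^esub> t \<ominus>\<^bsub>R\<^esub> b \<otimes>\<^bsub>R\<^esub> s) = \<zero>\<^bsub>R\<^esub>)}"

definition frac_class :: "('a, 'b) ring_scheme \<Rightarrow> 'a \<Rightarrow> 'a \<Rightarrow> ('a \<times> 'a) set" where
  "frac_class R a s = frac_rel R `` {(a, s)}"

text \<open>Operations on classes, defined via representatives (the union of the
  classes of all representative combinations, which is a single class).\<close>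
definition qring :: "('a, 'b) ring_scheme \<Rightarrow> ('a \<times> 'a) set ring" where
  "qring R = \<lparr> carrier = (carrier R \<times> reg R) // frac_rel R,
     monoid.mult = (\<lambda>X Y. \<Union>{frac_class R (a \<otimes>\<^bsub>R\<^esub> b) (s \<otimes>\<^bsub>R\<^esub> t) | a s b t. (a, s) \<in> X \<and> (b, t) \<in> Y}),
     one = frac_class R \<one>\<^bsub>R\<^esub> \<one>\<^bsub>R\<^esub>,
     zero = frac_class R \<zero>\<^bsub>R\<^esub> \<one>\<^bsub>R\<^esub>,
     add = (\<lambda>X Y. \<Union>{frac_class R (a \<otimes>\<^bsub>R\<^esub> t \<oplus>\<^bsub>R\<^esub> b \<otimes>\<^bsub>R\<^esub> s) (s \<otimes>\<^bsub>R\<^esub> t) | a s b t. (a, s) \<in> X \<and> (b, t) \<in> Y}) \<rparr>"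

end

theory Submission
  imports Defs
begin

(*
  Every element of q(R) is a fraction a/s with s regular, and a/s is zero, nilpotent, almost
  regular, or in eta(q(R)) exactly when a is zero, nilpotent, almost regular, or in eta(R).
  Hence roughly reducedness passes both ways, and a complement b of a in R gives the complement
  b/s of a/s. Conversely, a complement b/t of a/1 yields a b = 0 with a t + b almost regular.
  When a b = 0, nilpotency of (a + b) y forces that of a y and b y, since
  (a y)^2 = a y (a + b) y; thus (a t + b) y is nilpotent and a + b is almost regular.
*)

lemma (in ideal) rcos_in_reg_iff:
  assumes x: "x \<in> carrier R"
  shows "I +> x \<in> reg (R Quot I) \<longleftrightarrow> (\<forall>y \<in> carrier R. x \<otimes> y \<in> I \<longrightarrow> y \<in> I)"
proof -
  have coset_eq_I: "I +> y = I \<longleftrightarrow> y \<in> I" if "y \<in> carrier R" for y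
    using that rcos_const_imp_mem a_rcos_const by blast
  have carrier_Quot: "carrier (R Quot I) = (+>) I ` carrier R"
    by (auto simp: FactRing_def A_RCOSETS_def')
  have mult_Quot: "(I +> x) \<otimes>\<^bsub>R Quot I\<^esub> (I +> y) = I +> (x \<otimes> y)" if "y \<in> carrier R" for y
    using rcoset_mult_add[OF x that] by (simp add: FactRing_def)
  have "\<zero>\<^bsub>R Quot I\<^esub> = I"
    by (simp add: FactRing_def)
  then show ?thesis
    using x by (auto simp: reg_def carrier_Quot mult_Quot coset_eq_I)
qed

context cring
begin

lemma add_pow_eq_mult_add_pow:
  assumes x: "x \<in> carrier R" and y: "y \<in> carrier R"
  shows "\<exists>c \<in> carrier R. (x \<oplus> y) [^] (k::nat) = x \<otimes> c \<oplus> y [^] k"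
proof (induction k)
  case 0
  show ?case using x by (intro bexI[of _ \<zero>]) auto
next
  case (Suc k)
  then obtain c where c: "c \<in> carrier R" "(x \<oplus> y) [^] k = x \<otimes> c \<oplus> y [^] k"
    by blast
  have step: "(x \<otimes> c \<oplus> z) \<otimes> (x \<oplus> y) = x \<otimes> (c \<otimes> (x \<oplus> y) \<oplus> z) \<oplus> z \<otimes> y"
    if "z \<in> carrier R" for z
    using x y c(1) that by algebra
  have "(x \<oplus> y) [^] Suc k = x \<otimes> (c \<otimes> (x \<oplus> y) \<oplus> y [^] k) \<oplus> y [^] Suc k"
    using c step[of "y [^] k"] y by simp
  then show ?case using x y c by auto
qed

lemma nilrad_carrier: "nilrad R \<subseteq> carrier R"
  by (auto simp: nilrad_def)

lemma nilrad_ideal: "ideal (nilrad R) R"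
proof (rule idealI)
  show "ring R" by (rule ring_axioms)
  have mult_closed: "x \<otimes> a \<in> nilrad R" if "a \<in> nilrad R" "x \<in> carrier R" for a x
  proof -
    from that obtain n where a: "a \<in> carrier R" "a [^] (n::nat) = \<zero>"
      by (auto simp: nilrad_def)
    have "(x \<otimes> a) [^] n = x [^] n \<otimes> a [^] n"
      using a that by (simp add: nat_pow_distrib)
    then show ?thesis using a that by (auto simp: nilrad_def)
  qed
  have add_closed: "x \<oplus> y \<in> nilrad R" if "x \<in> nilrad R" "y \<in> nilrad R" for x y
  proof -
    from that obtain n m where x: "x \<in> carrier R" "x [^] (n::nat) = \<zero>"
      and y: "y \<in> carrier R" "y [^] (m::nat) = \<zero>"
      by (auto simp: nilrad_def)
    obtain c where c: "c \<in> carrier R" "(x \<oplus> y) [^] m = x \<otimes> c \<oplus> y [^] m"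
      using add_pow_eq_mult_add_pow x(1) y(1) by blast
    have "(x \<oplus> y) [^] (m * n) = ((x \<oplus> y) [^] m) [^] n"
      using x y by (simp add: nat_pow_pow)
    also have "\<dots> = x [^] n \<otimes> c [^] n"
      using x y c by (simp add: nat_pow_distrib)
    also have "\<dots> = \<zero>"
      using x c by simp
    finally show ?thesis using x y by (auto simp: nilrad_def)
  qed
  show "subgroup (nilrad R) (add_monoid R)"
  proof
    show "\<one>\<^bsub>add_monoid R\<^esub> \<in> nilrad R"
      by (auto simp: nilrad_def intro!: exI[of _ 1])
    show "inv\<^bsub>add_monoid R\<^esub> x \<in> nilrad R" if "x \<in> nilrad R" for x
      using mult_closed[OF that, of "\<ominus> \<one>"] that nilrad_carrier
      by (auto simp: a_inv_def[symmetric] l_minus)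
  qed (use nilrad_carrier add_closed in auto)
  show "x \<otimes> a \<in> nilrad R" "a \<otimes> x \<in> nilrad R" if "a \<in> nilrad R" "x \<in> carrier R" for a x
    using mult_closed[OF that] that nilrad_carrier by (auto simp: m_comm)
qed

lemma square_in_nilradD:
  assumes x: "x \<in> carrier R" and "x \<otimes> x \<in> nilrad R"
  shows "x \<in> nilrad R"
proof -
  obtain n where "(x \<otimes> x) [^] (n::nat) = \<zero>"
    using assms(2) by (auto simp: nilrad_def)
  then have "x [^] (n + n) = \<zero>"
    using x by (simp add: nat_pow_distrib nat_pow_mult)
  then show ?thesis using x by (auto simp: nilrad_def)
qed

lemma areg_iff:
  "x \<in> areg R \<longleftrightarrow> x \<in> carrier R \<and> (\<forall>y \<in> carrier R. x \<otimes> y \<in> nilrad R \<longrightarrow> y \<in> nilrad R)"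
  using ideal.rcos_in_reg_iff[OF nilrad_ideal] by (auto simp: areg_def)

lemma areg_carrier: "areg R \<subseteq> carrier R"
  by (auto simp: areg_iff)

lemma eta_carrier: "eta R \<subseteq> carrier R"
  by (auto simp: eta_def ann_def)

lemma orthogonal_mult_in_nilrad:
  assumes a: "a \<in> carrier R" and b: "b \<in> carrier R" and y: "y \<in> carrier R"
    and ab: "a \<otimes> b = \<zero>" and sum: "(a \<oplus> b) \<otimes> y \<in> nilrad R"
  shows "a \<otimes> y \<in> nilrad R"
proof (rule square_in_nilradD)
  interpret N: ideal "nilrad R" R by (rule nilrad_ideal)
  have "(a \<otimes> y) \<otimes> (a \<otimes> y) \<oplus> (a \<otimes> b) \<otimes> (y \<otimes> y) = (a \<otimes> y) \<otimes> ((a \<oplus> b) \<otimes> y)"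
    using a b y by algebra
  then have "(a \<otimes> y) \<otimes> (a \<otimes> y) = (a \<otimes> y) \<otimes> ((a \<oplus> b) \<otimes> y)"
    using a y ab by simp
  then show "(a \<otimes> y) \<otimes> (a \<otimes> y) \<in> nilrad R"
    using sum a y by (simp add: N.I_l_closed)
qed (use a y in simp)

lemma add_in_areg_if_orthogonal:
  assumes a: "a \<in> carrier R" and b: "b \<in> carrier R" and t: "t \<in> carrier R"
    and ab: "a \<otimes> b = \<zero>" and areg: "a \<otimes> t \<oplus> b \<in> areg R"
  shows "a \<oplus> b \<in> areg R"
proof -
  interpret N: ideal "nilrad R" R by (rule nilrad_ideal)
  have "y \<in> nilrad R" if y: "y \<in> carrier R" and sum: "(a \<oplus> b) \<otimes> y \<in> nilrad R" for y
  proof -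
    have "a \<otimes> y \<in> nilrad R"
      using orthogonal_mult_in_nilrad[OF a b y ab sum] .
    moreover have "b \<otimes> y \<in> nilrad R"
    proof (rule orthogonal_mult_in_nilrad[OF b a y])
      show "b \<otimes> a = \<zero>" using ab by (simp add: m_comm[OF a b])
      show "(b \<oplus> a) \<otimes> y \<in> nilrad R" using sum by (simp add: a_comm[OF a b])
    qed
    ultimately have "t \<otimes> (a \<otimes> y) \<oplus> b \<otimes> y \<in> nilrad R"
      using t by (simp add: N.I_l_closed N.a_closed)
    moreover have "t \<otimes> (a \<otimes> y) \<oplus> b \<otimes> y = (a \<otimes> t \<oplus> b) \<otimes> y"
      using a b t y by algebra
    ultimately have "(a \<otimes> t \<oplus> b) \<otimes> y \<in> nilrad R"
      by simp
    then show "y \<in> nilrad R"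
      using areg y unfolding areg_iff by blast
  qed
  then show ?thesis
    using a b unfolding areg_iff by blast
qed

lemma minus_eq_zero_iff:
  assumes "x \<in> carrier R" "y \<in> carrier R"
  shows "x \<ominus> y = \<zero> \<longleftrightarrow> x = y"
proof
  assume "x \<ominus> y = \<zero>"
  moreover have "x = (x \<ominus> y) \<oplus> y" using assms by algebra
  ultimately show "x = y" using assms by simp
qed (use assms in \<open>simp add: minus_eq r_neg\<close>)

lemma reg_carrier: "reg R \<subseteq> carrier R"
  by (auto simp: reg_def)

lemma reg_mult_eq_zero_iff:
  assumes "s \<in> reg R" "x \<in> carrier R"
  shows "s \<otimes> x = \<zero> \<longleftrightarrow> x = \<zero>"
  using assms unfolding reg_def by auto

lemma reg_cancel:
  assumes s: "s \<in> reg R" and x: "x \<in> carrier R" and y: "y \<in> carrier R"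
    and eq: "s \<otimes> x = s \<otimes> y"
  shows "x = y"
proof -
  have sc: "s \<in> carrier R" using s reg_carrier by blast
  have "s \<otimes> (x \<ominus> y) = s \<otimes> x \<ominus> s \<otimes> y"
    using sc x y by algebra
  also have "\<dots> = \<zero>"
    using eq sc y by (simp add: minus_eq_zero_iff)
  finally have "x \<ominus> y = \<zero>"
    using reg_mult_eq_zero_iff[OF s] x y by simp
  then show ?thesis
    using minus_eq_zero_iff[OF x y] by blast
qed

lemma one_in_reg [simp]: "\<one> \<in> reg R"
  by (auto simp: reg_def)

lemma ex_in_reg [simp]: "\<exists>s. s \<in> reg R"
  using one_in_reg by blast

lemma mult_in_reg [simp]:
  assumes s: "s \<in> reg R" and t: "t \<in> reg R"
  shows "s \<otimes> t \<in> reg R"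
proof -
  have sc: "s \<in> carrier R" and tc: "t \<in> carrier R"
    using s t reg_carrier by auto
  have "s \<otimes> t \<otimes> y = \<zero> \<longleftrightarrow> y = \<zero>" if "y \<in> carrier R" for y
    using that sc tc by (simp add: m_assoc reg_mult_eq_zero_iff[OF s] reg_mult_eq_zero_iff[OF t])
  then show ?thesis
    using sc tc by (auto simp: reg_def)
qed

lemma pow_in_reg [simp]: "s \<in> reg R \<Longrightarrow> s [^] (n::nat) \<in> reg R"
  by (induction n) simp_all

lemma frac_rel_iff:
  "((a, s), (b, t)) \<in> frac_rel R \<longleftrightarrow>
     a \<in> carrier R \<and> s \<in> reg R \<and> b \<in> carrier R \<and> t \<in> reg R \<and> a \<otimes> t = b \<otimes> s"
proof -
  have "(\<exists>u \<in> reg R. u \<otimes> (a \<otimes> t \<ominus> b \<otimes> s) = \<zero>) \<longleftrightarrow> a \<otimes> t = b \<otimes> s"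
    if "a \<in> carrier R" "s \<in> reg R" "b \<in> carrier R" "t \<in> reg R"
  proof -
    have "a \<otimes> t \<in> carrier R" "b \<otimes> s \<in> carrier R"
      using that reg_carrier by auto
    then show ?thesis
      using reg_mult_eq_zero_iff minus_eq_zero_iff by (auto intro: one_in_reg)
  qed
  then show ?thesis
    by (auto simp: frac_rel_def)
qed

lemma frac_rel_equiv: "equiv (carrier R \<times> reg R) (frac_rel R)"
proof (rule equivI)
  show "refl_on (carrier R \<times> reg R) (frac_rel R)"
    using reg_carrier by (auto simp: refl_on_def frac_rel_iff m_comm)
  show "sym (frac_rel R)"
    by (auto simp: sym_def frac_rel_iff)
  show "trans (frac_rel R)"
  proof (rule transI)
    fix x y z assume "(x, y) \<in> frac_rel R" "(y, z) \<in> frac_rel R"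
    then obtain a s b t c u where xyz: "x = (a, s)" "y = (b, t)" "z = (c, u)"
      and abc: "a \<in> carrier R" "b \<in> carrier R" "c \<in> carrier R"
      and stu: "s \<in> reg R" "t \<in> reg R" "u \<in> reg R"
      and eq: "a \<otimes> t = b \<otimes> s" "b \<otimes> u = c \<otimes> t"
      by (cases x, cases y, cases z) (auto simp: frac_rel_iff)
    have stu': "s \<in> carrier R" "t \<in> carrier R" "u \<in> carrier R"
      using stu reg_carrier by auto
    have "t \<otimes> (a \<otimes> u) = (a \<otimes> t) \<otimes> u"
      using abc stu' by algebra
    also have "\<dots> = (b \<otimes> u) \<otimes> s"
      using abc stu' eq(1) by (simp add: m_ac)
    also have "\<dots> = t \<otimes> (c \<otimes> s)"
      using abc stu' eq(2) by (simp add: m_ac)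
    finally have "a \<otimes> u = c \<otimes> s"
      using reg_cancel[OF stu(2)] abc stu' by simp
    then show "(x, z) \<in> frac_rel R"
      using xyz abc stu by (simp add: frac_rel_iff)
  qed
qed (auto simp: frac_rel_iff)

lemma frac_class_eq_iff:
  assumes "a \<in> carrier R" "s \<in> reg R" "b \<in> carrier R" "t \<in> reg R"
  shows "frac_class R a s = frac_class R b t \<longleftrightarrow> a \<otimes> t = b \<otimes> s"
  using eq_equiv_class_iff[OF frac_rel_equiv] assms
  by (simp add: frac_class_def frac_rel_iff)

lemma mem_frac_class_iff:
  "(b, t) \<in> frac_class R a s \<longleftrightarrow> ((a, s), (b, t)) \<in> frac_rel R"
  by (simp add: frac_class_def)

lemma qring_carrier:
  "carrier (qring R) = {frac_class R a s | a s. a \<in> carrier R \<and> s \<in> reg R}"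
  unfolding qring_def quotient_def frac_class_def by auto

lemma frac_class_in_carrier [simp]:
  "a \<in> carrier R \<Longrightarrow> s \<in> reg R \<Longrightarrow> frac_class R a s \<in> carrier (qring R)"
  using qring_carrier by blast

(* The redundant s \<in> carrier R lets algebra finish goals right after elimination. *)
lemma qring_carrierE:
  assumes "X \<in> carrier (qring R)"
  obtains a s where "a \<in> carrier R" "s \<in> reg R" "s \<in> carrier R" "X = frac_class R a s"
  using assms qring_carrier reg_carrier by blast

lemma qring_zero: "\<zero>\<^bsub>qring R\<^esub> = frac_class R \<zero> \<one>"
  by (simp add: qring_def)

lemma qring_one: "\<one>\<^bsub>qring R\<^esub> = frac_class R \<one> \<one>"
  by (simp add: qring_def)

lemma Union_frac_class_respects:
  assumes a: "a \<in> carrier R" and s: "s \<in> reg R" and b: "b \<in> carrier R" and t: "t \<in> reg R"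
    and respects: "\<And>a' s' b' t'. a' \<in> carrier R \<Longrightarrow> s' \<in> reg R \<Longrightarrow> b' \<in> carrier R \<Longrightarrow> t' \<in> reg R
      \<Longrightarrow> a \<otimes> s' = a' \<otimes> s \<Longrightarrow> b \<otimes> t' = b' \<otimes> t
      \<Longrightarrow> frac_class R (f a' s' b' t') (g a' s' b' t') = frac_class R (f a s b t) (g a s b t)"
  shows "\<Union>{frac_class R (f a' s' b' t') (g a' s' b' t') | a' s' b' t'.
            (a', s') \<in> frac_class R a s \<and> (b', t') \<in> frac_class R b t}
         = frac_class R (f a s b t) (g a s b t)" (is "\<Union>?S = ?C")
proof -
  have "?S = {?C}"
  proof (intro equalityI subsetI)
    fix X assume "X \<in> ?S"
    then obtain a' s' b' t' where X: "X = frac_class R (f a' s' b' t') (g a' s' b' t')"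
      and rel: "((a, s), (a', s')) \<in> frac_rel R" "((b, t), (b', t')) \<in> frac_rel R"
      unfolding mem_frac_class_iff by blast
    show "X \<in> {?C}"
      using rel respects[of a' s' b' t'] unfolding X frac_rel_iff by blast
  next
    have "(a, s) \<in> frac_class R a s" "(b, t) \<in> frac_class R b t"
      using a b s t by (simp_all add: mem_frac_class_iff frac_rel_iff)
    then show "X \<in> ?S" if "X \<in> {?C}" for X
      using that by blast
  qed
  then show ?thesis by simp
qed

lemma qring_mult [simp]:
  assumes a: "a \<in> carrier R" and s: "s \<in> reg R" and b: "b \<in> carrier R" and t: "t \<in> reg R"
  shows "frac_class R a s \<otimes>\<^bsub>qring R\<^esub> frac_class R b t = frac_class R (a \<otimes> b) (s \<otimes> t)"
  unfolding qring_def monoid.simps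
proof (rule Union_frac_class_respects[OF assms, where f = "\<lambda>a s b t. a \<otimes> b" and g = "\<lambda>a s b t. s \<otimes> t"])
  fix a' s' b' t'
  assume a': "a' \<in> carrier R" and s': "s' \<in> reg R" and b': "b' \<in> carrier R" and t': "t' \<in> reg R"
    and eq: "a \<otimes> s' = a' \<otimes> s" "b \<otimes> t' = b' \<otimes> t"
  have st: "s \<in> carrier R" "t \<in> carrier R" "s' \<in> carrier R" "t' \<in> carrier R"
    using s t s' t' reg_carrier by auto
  have "(a' \<otimes> b') \<otimes> (s \<otimes> t) = (a' \<otimes> s) \<otimes> (b' \<otimes> t)"
    using a' b' st by algebra
  also have "\<dots> = (a \<otimes> s') \<otimes> (b \<otimes> t')"
    using eq by simp
  also have "\<dots> = (a \<otimes> b) \<otimes> (s' \<otimes> t')"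
    using a b st by algebra
  finally show "frac_class R (a' \<otimes> b') (s' \<otimes> t') = frac_class R (a \<otimes> b) (s \<otimes> t)"
    using a b s t a' b' s' t' by (simp add: frac_class_eq_iff)
qed

lemma qring_add [simp]:
  assumes a: "a \<in> carrier R" and s: "s \<in> reg R" and b: "b \<in> carrier R" and t: "t \<in> reg R"
  shows "frac_class R a s \<oplus>\<^bsub>qring R\<^esub> frac_class R b t = frac_class R (a \<otimes> t \<oplus> b \<otimes> s) (s \<otimes> t)"
  unfolding qring_def ring.simps
proof (rule Union_frac_class_respects[OF assms,
      where f = "\<lambda>a s b t. a \<otimes> t \<oplus> b \<otimes> s" and g = "\<lambda>a s b t. s \<otimes> t"])
  fix a' s' b' t'
  assume a': "a' \<in> carrier R" and s': "s' \<in> reg R" and b': "b' \<in> carrier R" and t': "t' \<in> reg R"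
    and eq: "a \<otimes> s' = a' \<otimes> s" "b \<otimes> t' = b' \<otimes> t"
  have st: "s \<in> carrier R" "t \<in> carrier R" "s' \<in> carrier R" "t' \<in> carrier R"
    using s t s' t' reg_carrier by auto
  have "(a' \<otimes> t' \<oplus> b' \<otimes> s') \<otimes> (s \<otimes> t) = (a' \<otimes> s) \<otimes> (t' \<otimes> t) \<oplus> (b' \<otimes> t) \<otimes> (s' \<otimes> s)"
    using a' b' st by algebra
  also have "\<dots> = (a \<otimes> s') \<otimes> (t' \<otimes> t) \<oplus> (b \<otimes> t') \<otimes> (s' \<otimes> s)"
    using eq by simp
  also have "\<dots> = (a \<otimes> t \<oplus> b \<otimes> s) \<otimes> (s' \<otimes> t')"
    using a b st by algebra
  finally show "frac_class R (a' \<otimes> t' \<oplus> b' \<otimes> s') (s' \<otimes> t') = frac_class R (a \<otimes> t \<oplus> b \<otimes> s) (s \<otimes> t)"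
    using a b s t a' b' s' t' st by (simp add: frac_class_eq_iff)
qed

lemma qring_abelian_group: "abelian_group (qring R)"
proof (rule abelian_groupI)
  show "x \<oplus>\<^bsub>qring R\<^esub> y \<in> carrier (qring R)"
    if "x \<in> carrier (qring R)" "y \<in> carrier (qring R)" for x y
    using that by (elim qring_carrierE) simp
  show "\<zero>\<^bsub>qring R\<^esub> \<in> carrier (qring R)"
    by (simp add: qring_zero)
  show "x \<oplus>\<^bsub>qring R\<^esub> y \<oplus>\<^bsub>qring R\<^esub> z = x \<oplus>\<^bsub>qring R\<^esub> (y \<oplus>\<^bsub>qring R\<^esub> z)"
    if "x \<in> carrier (qring R)" "y \<in> carrier (qring R)" "z \<in> carrier (qring R)" for x y z
    using that by (elim qring_carrierE) (simp add: frac_class_eq_iff, algebra)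
  show "x \<oplus>\<^bsub>qring R\<^esub> y = y \<oplus>\<^bsub>qring R\<^esub> x"
    if "x \<in> carrier (qring R)" "y \<in> carrier (qring R)" for x y
    using that by (elim qring_carrierE) (simp add: frac_class_eq_iff, algebra)
  show "\<zero>\<^bsub>qring R\<^esub> \<oplus>\<^bsub>qring R\<^esub> x = x" if "x \<in> carrier (qring R)" for x
    using that by (elim qring_carrierE) (simp add: qring_zero frac_class_eq_iff, algebra)
  show "\<exists>y \<in> carrier (qring R). y \<oplus>\<^bsub>qring R\<^esub> x = \<zero>\<^bsub>qring R\<^esub>"
    if "x \<in> carrier (qring R)" for x
    using that
  proof (elim qring_carrierE)
    fix a s assume a: "a \<in> carrier R" and s: "s \<in> reg R" "s \<in> carrier R" and x: "x = frac_class R a s"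
    have "frac_class R (\<ominus> a) s \<oplus>\<^bsub>qring R\<^esub> x = \<zero>\<^bsub>qring R\<^esub>"
      using a s unfolding x by (simp add: qring_zero frac_class_eq_iff, algebra)
    then show ?thesis
      using a s by (intro bexI[of _ "frac_class R (\<ominus> a) s"]) auto
  qed
qed

lemma qring_comm_monoid: "comm_monoid (qring R)"
proof (rule comm_monoidI)
  show "x \<otimes>\<^bsub>qring R\<^esub> y \<in> carrier (qring R)"
    if "x \<in> carrier (qring R)" "y \<in> carrier (qring R)" for x y
    using that by (elim qring_carrierE) simp
  show "\<one>\<^bsub>qring R\<^esub> \<in> carrier (qring R)"
    by (simp add: qring_one)
  show "x \<otimes>\<^bsub>qring R\<^esub> y \<otimes>\<^bsub>qring R\<^esub> z = x \<otimes>\<^bsub>qring R\<^esub> (y \<otimes>\<^bsub>qring R\<^esub> z)"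
    if "x \<in> carrier (qring R)" "y \<in> carrier (qring R)" "z \<in> carrier (qring R)" for x y z
    using that by (elim qring_carrierE) (simp add: frac_class_eq_iff, algebra)
  show "\<one>\<^bsub>qring R\<^esub> \<otimes>\<^bsub>qring R\<^esub> x = x" if "x \<in> carrier (qring R)" for x
    using that by (elim qring_carrierE) (simp add: qring_one frac_class_eq_iff, algebra)
  show "x \<otimes>\<^bsub>qring R\<^esub> y = y \<otimes>\<^bsub>qring R\<^esub> x"
    if "x \<in> carrier (qring R)" "y \<in> carrier (qring R)" for x y
    using that by (elim qring_carrierE) (simp add: frac_class_eq_iff, algebra)
qed

lemma qring_cring: "cring (qring R)"
proof (rule cringI)
  show "abelian_group (qring R)" "comm_monoid (qring R)"
    by (rule qring_abelian_group, rule qring_comm_monoid)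
  show "(x \<oplus>\<^bsub>qring R\<^esub> y) \<otimes>\<^bsub>qring R\<^esub> z = x \<otimes>\<^bsub>qring R\<^esub> z \<oplus>\<^bsub>qring R\<^esub> y \<otimes>\<^bsub>qring R\<^esub> z"
    if "x \<in> carrier (qring R)" "y \<in> carrier (qring R)" "z \<in> carrier (qring R)" for x y z
    using that by (elim qring_carrierE) (simp add: frac_class_eq_iff, algebra)
qed

lemma qring_ball_iff:
  "(\<forall>X \<in> carrier (qring R). P X) \<longleftrightarrow> (\<forall>a \<in> carrier R. \<forall>s \<in> reg R. P (frac_class R a s))"
  by (auto simp: qring_carrier)

lemma qring_bex_iff:
  "(\<exists>X \<in> carrier (qring R). P X) \<longleftrightarrow> (\<exists>a \<in> carrier R. \<exists>s \<in> reg R. P (frac_class R a s))"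
  by (auto simp: qring_carrier)

lemma qring_pow:
  assumes "a \<in> carrier R" "s \<in> reg R"
  shows "frac_class R a s [^]\<^bsub>qring R\<^esub> (n::nat) = frac_class R (a [^] n) (s [^] n)"
  using assms by (induction n) (simp_all add: qring_one)

lemma frac_class_eq_zero_iff:
  assumes "a \<in> carrier R" "s \<in> reg R"
  shows "frac_class R a s = \<zero>\<^bsub>qring R\<^esub> \<longleftrightarrow> a = \<zero>"
  using assms reg_carrier by (auto simp: qring_zero frac_class_eq_iff)

lemma frac_class_in_nilrad_iff:
  assumes "a \<in> carrier R" "s \<in> reg R"
  shows "frac_class R a s \<in> nilrad (qring R) \<longleftrightarrow> a \<in> nilrad R"
  using assms by (simp add: nilrad_def qring_pow frac_class_eq_zero_iff)

lemma frac_class_in_areg_iff: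
  assumes a: "a \<in> carrier R" and s: "s \<in> reg R"
  shows "frac_class R a s \<in> areg (qring R) \<longleftrightarrow> a \<in> areg R"
proof -
  interpret Q: cring "qring R" by (rule qring_cring)
  have "frac_class R a s \<otimes>\<^bsub>qring R\<^esub> frac_class R b t \<in> nilrad (qring R) \<longleftrightarrow> a \<otimes> b \<in> nilrad R"
    if "b \<in> carrier R" "t \<in> reg R" for b t
    using a s that by (simp add: frac_class_in_nilrad_iff)
  then have "frac_class R a s \<in> areg (qring R) \<longleftrightarrow>
      (\<forall>b \<in> carrier R. \<forall>t \<in> reg R. a \<otimes> b \<in> nilrad R \<longrightarrow> b \<in> nilrad R)"
    using a s by (simp add: Q.areg_iff qring_ball_iff frac_class_in_nilrad_iff)
  then show ?thesis
    using a by (simp add: areg_iff)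
qed

lemma frac_class_in_eta_iff:
  assumes b: "b \<in> carrier R" and t: "t \<in> reg R"
  shows "frac_class R b t \<in> eta (qring R) \<longleftrightarrow> b \<in> eta R"
proof -
  interpret Q: cring "qring R" by (rule qring_cring)
  have "frac_class R b t \<in> eta (qring R) \<longleftrightarrow>
      (\<exists>X \<in> carrier (qring R). X \<in> areg (qring R) \<and> X \<otimes>\<^bsub>qring R\<^esub> frac_class R b t = \<zero>\<^bsub>qring R\<^esub>)"
    using b t Q.areg_carrier by (auto simp: eta_def ann_def)
  also have "\<dots> \<longleftrightarrow> (\<exists>a \<in> carrier R. \<exists>s \<in> reg R. a \<in> areg R \<and> a \<otimes> b = \<zero>)"
    using b t by (simp add: qring_bex_iff frac_class_in_areg_iff frac_class_eq_zero_iff)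
  also have "\<dots> \<longleftrightarrow> b \<in> eta R"
    using b areg_carrier by (auto simp: eta_def ann_def intro: one_in_reg)
  finally show ?thesis .
qed

lemma roughly_reduced_iff:
  "roughly_reduced R \<longleftrightarrow> (\<forall>x \<in> carrier R. x \<in> eta R \<longleftrightarrow> x \<in> nilrad R)"
  using eta_carrier nilrad_carrier by (auto simp: roughly_reduced_def)

lemma roughly_reduced_qring_iff: "roughly_reduced (qring R) \<longleftrightarrow> roughly_reduced R"
proof -
  interpret Q: cring "qring R" by (rule qring_cring)
  have "roughly_reduced (qring R) \<longleftrightarrow>
      (\<forall>a \<in> carrier R. \<forall>s \<in> reg R. a \<in> eta R \<longleftrightarrow> a \<in> nilrad R)"
    by (simp add: Q.roughly_reduced_iff qring_ball_iff frac_class_in_eta_iff frac_class_in_nilrad_iff)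
  also have "\<dots> \<longleftrightarrow> roughly_reduced R"
    by (simp add: roughly_reduced_iff)
  finally show ?thesis .
qed

lemma roughly_complemented_qring_iff:
  "roughly_complemented (qring R) \<longleftrightarrow> roughly_complemented R"
proof
  assume compl: "roughly_complemented (qring R)"
  show "roughly_complemented R"
    unfolding roughly_complemented_def
  proof
    fix a assume a: "a \<in> carrier R"
    have "frac_class R a \<one> \<in> carrier (qring R)"
      using a by simp
    then obtain Y where "Y \<in> carrier (qring R)"
      and orth: "frac_class R a \<one> \<otimes>\<^bsub>qring R\<^esub> Y = \<zero>\<^bsub>qring R\<^esub>"
      and sum: "frac_class R a \<one> \<oplus>\<^bsub>qring R\<^esub> Y \<in> areg (qring R)"
      using compl unfolding roughly_complemented_def by blast
    then obtain b t where b: "b \<in> carrier R" and t: "t \<in> reg R" "t \<in> carrier R"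
      and Y: "Y = frac_class R b t"
      by (elim qring_carrierE)
    have ab: "a \<otimes> b = \<zero>"
      using orth a b t unfolding Y by (simp add: frac_class_eq_zero_iff)
    have "a \<otimes> t \<oplus> b \<in> areg R"
      using sum a b t unfolding Y by (simp add: frac_class_in_areg_iff)
    then have "a \<oplus> b \<in> areg R"
      using add_in_areg_if_orthogonal[OF a b t(2) ab] by blast
    then show "\<exists>b \<in> carrier R. a \<otimes> b = \<zero> \<and> a \<oplus> b \<in> areg R"
      using ab b by blast
  qed
next
  assume compl: "roughly_complemented R"
  show "roughly_complemented (qring R)"
    unfolding roughly_complemented_def qring_ball_iff qring_bex_iff
  proof (intro ballI)
    fix a s assume a: "a \<in> carrier R" and s: "s \<in> reg R"
    obtain b where b: "b \<in> carrier R" and ab: "a \<otimes> b = \<zero>" and sum: "a \<oplus> b \<in> areg R"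
      using compl a unfolding roughly_complemented_def by blast
    have sc: "s \<in> carrier R"
      using s reg_carrier by blast
    have "frac_class R a s \<otimes>\<^bsub>qring R\<^esub> frac_class R b s = \<zero>\<^bsub>qring R\<^esub>"
      using a b s ab by (simp add: frac_class_eq_zero_iff)
    moreover have "frac_class R a s \<oplus>\<^bsub>qring R\<^esub> frac_class R b s = frac_class R (a \<oplus> b) s"
      using a b s sc by (simp add: frac_class_eq_iff, algebra)
    then have "frac_class R a s \<oplus>\<^bsub>qring R\<^esub> frac_class R b s \<in> areg (qring R)"
      using a b s sum by (simp add: frac_class_in_areg_iff)
    ultimately show "\<exists>b' \<in> carrier R. \<exists>t \<in> reg R.
        frac_class R a s \<otimes>\<^bsub>qring R\<^esub> frac_class R b' t = \<zero>\<^bsub>qring R\<^esub> \<and>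
        frac_class R a s \<oplus>\<^bsub>qring R\<^esub> frac_class R b' t \<in> areg (qring R)"
      using b s by blast
  qed
qed

end

theorem mainTheorem19:
  fixes R :: "('a, 'b) ring_scheme"
  assumes "cring R"
  shows "(roughly_reduced R \<longleftrightarrow> roughly_reduced (qring R))
       \<and> (roughly_complemented R \<longleftrightarrow> roughly_complemented (qring R))"
  using cring.roughly_reduced_qring_iff[OF assms] cring.roughly_complemented_qring_iff[OF assms]
  by blast

end
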